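(* Let $N=(P,T,F,I,O)$ be a pWF net such that no output place has an outgoing edge, i.e. $p\bullet=\emptyset$ for all $p\in O$. Then $N$ is $*$-sound if and only if $N$ is sub-sound.
   Context: Petri nets and markings. A Petri net is a triple $(P,T,F)$ with $P$ a finite set of places, $T$ a finite set of transitions, $P\cap T=\emptyset$, and $F\subseteq (P\times T)\cup(T\times P)$. For a node $x$, $\bullet x=\{y\mid (y,x)\in F\}$, $x\bullet=\{y\mid (x,y)\in F\}$. A marking is a multiset over $P$ (a function $P\to\mathbb N$); sets of places are identified with bags of multiplicity one, $+,-,\le$ are pointwise, and $k.m$ is the sum of $k$ copies of $m$. Transition $t$ is enabled at $m$ iff $\bullet t\le m$, firing gives $m-\bullet t+t\bullet$, and $m\xrightarrow{*}m'$ denotes reachability by a finite (possibly empty) firing sequence. A pWF net is $(P,T,F,I,O)$ with $(P,T,F)$ a Petri net, $I,O\subseteq P$ non-empty, every node reachable by a directed path from some node of $I$, and some node of $O$ reachable from every node. Soundness. A pWF net is $k$-sound if for every marking $m$ with $k.I\xrightarrow{*}m$ we have $m\xrightarrow{*}k.O$; $*$-sound if $k$-sound for all $k\ge1$. It is substitution-sound (sub-sound) if for all integers $k\ge k'\ge 0$ and every marking $m'$: if $k.I\xrightarrow{*}m'+k'.O$ then $m'\xrightarrow{*}(k-k').O$. *)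

theory Defs
  imports Main "HOL-Library.Multiset"
begin

datatype ('p, 't) node = Place 'p | Trans 't

definition preset :: "('p, 't) node rel \<Rightarrow> 't \<Rightarrow> 'p multiset" where
  "preset F t = mset_set {p. (Place p, Trans t) \<in> F}"

definition postset :: "('p, 't) node rel \<Rightarrow> 't \<Rightarrow> 'p multiset" where
  "postset F t = mset_set {p. (Trans t, Place p) \<in> F}"

definition fire_step :: "'t set \<Rightarrow> ('p, 't) node rel \<Rightarrow> 'p multiset \<Rightarrow> 'p multiset \<Rightarrow> bool" where
  "fire_step T F m m' \<longleftrightarrow>
     (\<exists>t\<in>T. preset F t \<subseteq># m \<and> m' = m - preset F t + postset F t)"

definition reach :: "'t set \<Rightarrow> ('p, 't) node rel \<Rightarrow> 'p multiset \<Rightarrow> 'p multiset \<Rightarrow> bool" where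
  "reach T F = (fire_step T F)\<^sup>*\<^sup>*"

definition kcopies :: "nat \<Rightarrow> 'p set \<Rightarrow> 'p multiset" where
  "kcopies k A = repeat_mset k (mset_set A)"

definition nodes :: "'p set \<Rightarrow> 't set \<Rightarrow> ('p, 't) node set" where
  "nodes P T = Place ` P \<union> Trans ` T"

definition petri_net :: "'p set \<Rightarrow> 't set \<Rightarrow> ('p, 't) node rel \<Rightarrow> bool" where
  "petri_net P T F \<longleftrightarrow> finite P \<and> finite T \<and>
     F \<subseteq> (Place ` P \<times> Trans ` T) \<union> (Trans ` T \<times> Place ` P)"

definition pWF :: "'p set \<Rightarrow> 't set \<Rightarrow> ('p, 't) node rel \<Rightarrow> 'p set \<Rightarrow> 'p set \<Rightarrow> bool" where
  "pWF P T F In Out \<longleftrightarrow> petri_net P T F \<and>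
     In \<subseteq> P \<and> In \<noteq> {} \<and> Out \<subseteq> P \<and> Out \<noteq> {} \<and>
     (\<forall>x\<in>nodes P T. \<exists>i\<in>In. (Place i, x) \<in> F\<^sup>*) \<and>
     (\<forall>x\<in>nodes P T. \<exists>q\<in>Out. (x, Place q) \<in> F\<^sup>*)"

definition k_sound :: "nat \<Rightarrow> 'p set \<Rightarrow> 't set \<Rightarrow> ('p, 't) node rel \<Rightarrow> 'p set \<Rightarrow> 'p set \<Rightarrow> bool" where
  "k_sound k P T F In Out \<longleftrightarrow>
     (\<forall>m. reach T F (kcopies k In) m \<longrightarrow> reach T F m (kcopies k Out))"

definition star_sound :: "'p set \<Rightarrow> 't set \<Rightarrow> ('p, 't) node rel \<Rightarrow> 'p set \<Rightarrow> 'p set \<Rightarrow> bool" where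
  "star_sound P T F In Out \<longleftrightarrow> (\<forall>k\<ge>1. k_sound k P T F In Out)"

definition sub_sound :: "'p set \<Rightarrow> 't set \<Rightarrow> ('p, 't) node rel \<Rightarrow> 'p set \<Rightarrow> 'p set \<Rightarrow> bool" where
  "sub_sound P T F In Out \<longleftrightarrow>
     (\<forall>k k' m'. k' \<le> k \<longrightarrow> reach T F (kcopies k In) (m' + kcopies k' Out) \<longrightarrow>
        reach T F m' (kcopies (k - k') Out))"

end

theory Submission
  imports Defs
begin

(* Substitution-soundness implies star-soundness for every pWF net: take k' = 0.
   For the converse, the key observation is that tokens on places without outgoing arcs are
   inert: no transition consumes them, so a firing sequence from m + x, with x supported on
   such places, is a firing sequence from m with x carried along unchanged (frame lemmas
   fire_step_frame and reach_frame).  Given k.I -->* m' + k'.O with k \<ge> 1, k-soundness yields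
   m' + k'.O -->* k.O; stripping the inert k'.O gives m' -->* (k - k').O.
   The case k = 0 is not covered by star-soundness; it is handled by noting that in a pWF
   net every transition has an input place, so the empty marking is dead. *)

lemma kcopies_add: "kcopies (a + b) A = kcopies a A + kcopies b A"
  by (simp add: kcopies_def repeat_mset_distrib)

lemma kcopies_zero [simp]: "kcopies 0 A = 0"
  by (simp add: kcopies_def)

(* k.A only puts tokens on places of A (also when A is infinite, where mset_set A = 0). *)
lemma set_mset_kcopies: "set_mset (kcopies k A) \<subseteq> A"
proof
  fix p assume "p \<in># kcopies k A"
  then have "p \<in># mset_set A"
    by (metis count_eq_zero_iff count_repeat_mset kcopies_def mult_0_right)
  then show "p \<in> A"
    by (metis elem_mset_set empty_iff mset_set.infinite set_mset_empty)
qed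

lemma preset_has_arc:
  assumes "p \<in># preset F t"
  shows "(Place p, Trans t) \<in> F"
  using assms unfolding preset_def
  by (metis elem_mset_set empty_iff mem_Collect_eq mset_set.infinite set_mset_empty)

lemma fire_step_frame:
  assumes inert: "\<forall>p\<in>D. {y. (Place p, y) \<in> F} = {}"
    and xD: "set_mset x \<subseteq> D"
    and step: "fire_step T F (m + x) z"
  shows "\<exists>m'. z = m' + x \<and> fire_step T F m m'"
proof -
  from step obtain t where t: "t \<in> T" "preset F t \<subseteq># m + x"
    and z: "z = m + x - preset F t + postset F t" unfolding fire_step_def by blast
  have disjoint: "count x p = 0" if "p \<in># preset F t" for p
    using preset_has_arc[OF that] inert xD by (auto simp: count_eq_zero_iff)
  have enabled: "preset F t \<subseteq># m"
    unfolding subseteq_mset_def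
  proof
    fix p
    show "count (preset F t) p \<le> count m p"
    proof (cases "p \<in># preset F t")
      case True
      then have "count (preset F t) p \<le> count m p + count x p"
        using t(2) by (metis count_union mset_subset_eq_count)
      then show ?thesis using disjoint[OF True] by simp
    qed (simp add: not_in_iff)
  qed
  have "z = (m - preset F t + postset F t) + x"
    using z subset_mset.add_diff_assoc2[OF enabled, of x] by (simp add: add_ac)
  moreover have "fire_step T F m (m - preset F t + postset F t)"
    using t(1) enabled unfolding fire_step_def by blast
  ultimately show ?thesis by blast
qed

lemma reach_frame:
  assumes inert: "\<forall>p\<in>D. {y. (Place p, y) \<in> F} = {}"
    and xD: "set_mset x \<subseteq> D"
    and r: "reach T F (m + x) m2"
  shows "\<exists>m'. m2 = m' + x \<and> reach T F m m'"
  using r[unfolded reach_def]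
proof (induction rule: rtranclp_induct)
  case base
  then show ?case by (auto simp: reach_def)
next
  case (step y z)
  then obtain m' where y: "y = m' + x" and r': "reach T F m m'" by blast
  then obtain m'' where "z = m'' + x" "fire_step T F m' m''"
    using fire_step_frame[OF inert xD] step(2) by blast
  moreover have "reach T F m m''"
    using r' \<open>fire_step T F m' m''\<close> unfolding reach_def by simp
  ultimately show ?case by blast
qed

(* Every transition of a pWF net is reached from an input place, so it has an input arc,
   and that arc comes from a place. *)
lemma pWF_preset_nonempty:
  assumes "pWF P T F In Out" and "t \<in> T"
  shows "preset F t \<noteq> 0"
proof -
  have net: "petri_net P T F" using assms(1) unfolding pWF_def by blast
  have "Trans t \<in> nodes P T" using assms(2) by (simp add: nodes_def)
  then obtain i where "(Place i, Trans t) \<in> F\<^sup>*" using assms(1) unfolding pWF_def by blast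
  then obtain y where "(y, Trans t) \<in> F" by (cases rule: rtranclE) auto
  then obtain p where arc: "(Place p, Trans t) \<in> F"
    using net unfolding petri_net_def by auto
  have "{p. (Place p, Trans t) \<in> F} \<subseteq> P"
    using net unfolding petri_net_def by auto
  then have "finite {p. (Place p, Trans t) \<in> F}"
    using net unfolding petri_net_def by (blast intro: finite_subset)
  then show ?thesis unfolding preset_def using arc
    by (metis empty_iff mem_Collect_eq mset_set_empty_iff)
qed

(* Without transitions of empty preset, nothing is enabled at the empty marking. *)
lemma reach_from_empty:
  assumes "\<forall>t\<in>T. preset F t \<noteq> 0" and "reach T F 0 m"
  shows "m = 0"
  using assms(2)[unfolded reach_def]
proof (induction rule: rtranclp_induct)
  case (step y z)
  then show ?case using assms(1) unfolding fire_step_def by auto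
qed simp

lemma sub_sound_imp_star_sound:
  assumes "sub_sound P T F In Out"
  shows "star_sound P T F In Out"
  unfolding star_sound_def k_sound_def
proof (intro allI impI)
  fix k m assume "reach T F (kcopies k In) m"
  then show "reach T F m (kcopies k Out)"
    using assms[unfolded sub_sound_def, rule_format, of 0 k m] by simp
qed

lemma star_sound_imp_sub_sound:
  assumes wf: "pWF P T F In Out"
    and inert: "\<forall>p\<in>Out. {y. (Place p, y) \<in> F} = {}"
    and star: "star_sound P T F In Out"
  shows "sub_sound P T F In Out"
  unfolding sub_sound_def
proof (intro allI impI)
  fix k k' m'
  assume le: "k' \<le> k" and r: "reach T F (kcopies k In) (m' + kcopies k' Out)"
  show "reach T F m' (kcopies (k - k') Out)"
  proof (cases "k = 0")
    case True
    then have "m' = 0"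
      using r le reach_from_empty[of T F] pWF_preset_nonempty[OF wf] by simp
    then show ?thesis using True by (simp add: reach_def)
  next
    case False
    then have "reach T F (m' + kcopies k' Out) (kcopies k Out)"
      using star r unfolding star_sound_def k_sound_def by simp
    then obtain m3 where m3: "kcopies k Out = m3 + kcopies k' Out" "reach T F m' m3"
      using reach_frame[OF inert set_mset_kcopies] by blast
    have "kcopies k Out = kcopies (k - k') Out + kcopies k' Out"
      using le by (simp flip: kcopies_add)
    then show ?thesis using m3 by simp
  qed
qed

theorem mainTheorem6:
  fixes P :: "'p set" and T :: "'t set" and F :: "('p, 't) node rel" and In Out :: "'p set"
  assumes "pWF P T F In Out"
    and "\<forall>p\<in>Out. {x. (Place p, x) \<in> F} = {}"
  shows "star_sound P T F In Out \<longleftrightarrow> sub_sound P T F In Out"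
  using sub_sound_imp_star_sound star_sound_imp_sub_sound[OF assms] by blast

end
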